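(* Let $f$ be a complex-valued harmonic function in an open set $R\subseteq\mathbb{C}$. If $\mathrm{Val}(f,w)$ is finite for each $w\in\mathbb{C}$, then $\operatorname{int}(f(S)\cup C(f))=\varnothing$.
   Context: Writing $f=u+iv$, $J_f=u_xv_y-u_yv_x$ and $S=\{z\in R: J_f(z)=0\}$. $C(f)$ is the set of finite points $\zeta\in\mathbb{C}$ for which there is a sequence $(z_n)\subset R$ converging to a point of $\partial R$ or with $|z_n|\to\infty$, such that $f(z_n)\to\zeta$. $\mathrm{Val}(f,w)$ is the number of distinct $z\in R$ with $f(z)=w$. *)

theory Defs
  imports "HOL-Analysis.Analysis"
begin

definition dx :: "(complex \<Rightarrow> complex) \<Rightarrow> complex \<Rightarrow> complex" where
  "dx f z = vector_derivative (\<lambda>t::real. f (z + of_real t)) (at 0)"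

definition dy :: "(complex \<Rightarrow> complex) \<Rightarrow> complex \<Rightarrow> complex" where
  "dy f z = vector_derivative (\<lambda>t::real. f (z + \<i> * of_real t)) (at 0)"

definition harmonic_on :: "complex set \<Rightarrow> (complex \<Rightarrow> complex) \<Rightarrow> bool" where
  "harmonic_on R f \<longleftrightarrow> open R \<and>
     (\<forall>z\<in>R. f differentiable (at z)) \<and>
     (\<forall>z\<in>R. dx f differentiable (at z) \<and> dy f differentiable (at z)) \<and>
     continuous_on R (dx (dx f)) \<and> continuous_on R (dy (dx f)) \<and>
     continuous_on R (dx (dy f)) \<and> continuous_on R (dy (dy f)) \<and>
     (\<forall>z\<in>R. dx (dx f) z + dy (dy f) z = 0)"

definition jac :: "(complex \<Rightarrow> complex) \<Rightarrow> complex \<Rightarrow> real" where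
  "jac f z = Re (dx f z) * Im (dy f z) - Re (dy f z) * Im (dx f z)"

definition singset :: "complex set \<Rightarrow> (complex \<Rightarrow> complex) \<Rightarrow> complex set" where
  "singset R f = {z \<in> R. jac f z = 0}"

definition cluster_set :: "complex set \<Rightarrow> (complex \<Rightarrow> complex) \<Rightarrow> complex set" where
  "cluster_set R f = {\<zeta>. \<exists>zs :: nat \<Rightarrow> complex. (\<forall>n. zs n \<in> R) \<and>
      ((\<exists>p\<in>frontier R. zs \<longlonglongrightarrow> p) \<or> filterlim (\<lambda>n. norm (zs n)) at_top sequentially) \<and>
      (\<lambda>n. f (zs n)) \<longlonglongrightarrow> \<zeta>}"

definition Val :: "complex set \<Rightarrow> (complex \<Rightarrow> complex) \<Rightarrow> complex \<Rightarrow> nat" where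
  "Val R f w = card {z \<in> R. f z = w}"

end

(*
  By Sard's theorem the critical values
  f(S) form a null set. The Jacobian cannot vanish on an open set: there f would have rank one
  somewhere, hence a level curve and an infinite fibre. So every point of R is close to one with a
  regular value, and near a regular value w the Val w preimages carry disjoint local inverse
  branches, making Val lower semicontinuous at regular values.

  If f(S) \<union> C(f) contained a disc, Baire category would give a ball in it on which Val is bounded
  at regular values. Take a regular value w there at which Val is maximal. By maximality, the
  preimages of regular values near w all lie on the branches through the fibre of w, inside a
  compact subset of R. But w \<in> C(f) is a limit of f along a sequence escaping to the boundary or
  to infinity, which can be chosen with regular values, a contradiction.
*)
theory Submission
  imports Defs
begin

section \<open>Real derivatives in the plane\<close>

lemma vector_derivative_along_line:
  assumes "(f has_derivative L) (at z)"
  shows "vector_derivative (\<lambda>t. f (z + t *\<^sub>R v)) (at 0) = L v"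
proof -
  have "((\<lambda>t. z + t *\<^sub>R v) has_derivative (\<lambda>t. t *\<^sub>R v)) (at 0)"
    by (auto intro!: derivative_eq_intros)
  from diff_chain_at[OF this] assms
  have "((\<lambda>t. f (z + t *\<^sub>R v)) has_derivative (\<lambda>t. L (t *\<^sub>R v))) (at 0)"
    by (simp add: o_def)
  then have "((\<lambda>t. f (z + t *\<^sub>R v)) has_vector_derivative L v) (at 0)"
    using linear_scale[OF has_derivative_linear[OF assms]]
    by (simp add: has_vector_derivative_def)
  then show ?thesis by (rule vector_derivative_at)
qed

lemma dx_eq_derivative: "(f has_derivative L) (at z) \<Longrightarrow> dx f z = L 1"
  using vector_derivative_along_line[of f L z 1] by (simp add: dx_def scaleR_conv_of_real)

lemma dy_eq_derivative: "(f has_derivative L) (at z) \<Longrightarrow> dy f z = L \<i>"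
  using vector_derivative_along_line[of f L z \<i>]
  by (simp add: dy_def scaleR_conv_of_real mult.commute)

definition real_derivative :: "(complex \<Rightarrow> complex) \<Rightarrow> complex \<Rightarrow> complex \<Rightarrow> complex" where
  "real_derivative f z h = of_real (Re h) * dx f z + of_real (Im h) * dy f z"

lemma linear_complex_eq:
  assumes "linear L"
  shows "L h = of_real (Re h) * L 1 + of_real (Im h) * L \<i>"
proof -
  have "h = Re h *\<^sub>R 1 + Im h *\<^sub>R \<i>"
    by (simp add: complex_eq_iff)
  then have "L h = L (Re h *\<^sub>R 1 + Im h *\<^sub>R \<i>)"
    by (rule arg_cong)
  also have "\<dots> = Re h *\<^sub>R L 1 + Im h *\<^sub>R L \<i>"
    by (simp only: linear_add[OF assms] linear_scale[OF assms])
  finally show ?thesis by (simp add: scaleR_conv_of_real)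
qed

lemma has_derivative_real_derivative:
  assumes "f differentiable (at z)"
  shows "(f has_derivative real_derivative f z) (at z)"
proof -
  obtain L where L: "(f has_derivative L) (at z)"
    using assms by (auto simp: differentiable_def)
  have "L h = real_derivative f z h" for h
    unfolding real_derivative_def dx_eq_derivative[OF L] dy_eq_derivative[OF L]
    by (rule linear_complex_eq[OF has_derivative_linear[OF L]])
  then have "L = real_derivative f z" ..
  with L show ?thesis by simp
qed

text \<open>In real coordinates, \<open>h \<mapsto> Re h * a + Im h * b\<close> has the columns \<open>a\<close>, \<open>b\<close> and hence
  determinant \<open>Re a * Im b - Re b * Im a\<close>; for \<open>a = dx f z\<close>, \<open>b = dy f z\<close> this is \<open>jac f z\<close>.\<close>

lemma real_linear_complex_eq_0_imp:
  fixes a b :: complex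
  assumes "Re a * Im b - Re b * Im a \<noteq> 0" "of_real s * a + of_real t * b = 0"
  shows "s = 0 \<and> t = 0"
proof -
  have re: "s * Re a + t * Re b = 0" and im: "s * Im a + t * Im b = 0"
    using assms(2) by (auto simp: complex_eq_iff)
  have "s * (Re a * Im b - Re b * Im a) = (s * Re a + t * Re b) * Im b - (s * Im a + t * Im b) * Re b"
    "t * (Re a * Im b - Re b * Im a) = (s * Im a + t * Im b) * Re a - (s * Re a + t * Re b) * Im a"
    by (simp_all add: algebra_simps)
  then have "s * (Re a * Im b - Re b * Im a) = 0" "t * (Re a * Im b - Re b * Im a) = 0"
    unfolding re im by simp_all
  with assms(1) show ?thesis by simp
qed

lemma real_linear_complex_kernel:
  fixes a b :: complex
  assumes "Re a * Im b - Re b * Im a = 0"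
  obtains k where "k \<noteq> 0" "of_real (Re k) * a + of_real (Im k) * b = 0"
proof (cases "a = 0")
  case True
  then show ?thesis by (intro that[of 1]) simp_all
next
  case False
  define k where "k = Complex (- Re b * Re a - Im b * Im a) (Re a * Re a + Im a * Im a)"
  have "Re a \<noteq> 0 \<or> Im a \<noteq> 0"
    using False by (simp add: complex_eq_iff)
  then have "Im k \<noteq> 0"
    by (simp add: k_def sum_squares_eq_zero_iff)
  then have "k \<noteq> 0" by auto
  have "Re k * Re a + Im k * Re b = - Im a * (Re a * Im b - Re b * Im a)"
    "Re k * Im a + Im k * Im b = Re a * (Re a * Im b - Re b * Im a)"
    by (simp_all add: k_def algebra_simps)
  then have "Re k * Re a + Im k * Re b = 0" "Re k * Im a + Im k * Im b = 0"
    unfolding assms by simp_all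
  then have "of_real (Re k) * a + of_real (Im k) * b = 0"
    by (simp add: complex_eq_iff)
  with \<open>k \<noteq> 0\<close> show ?thesis by (rule that)
qed

lemma inj_real_linear_complex_iff:
  fixes a b :: complex
  shows "inj (\<lambda>h. of_real (Re h) * a + of_real (Im h) * b) \<longleftrightarrow> Re a * Im b - Re b * Im a \<noteq> 0"
proof
  assume det: "Re a * Im b - Re b * Im a \<noteq> 0"
  show "inj (\<lambda>h. of_real (Re h) * a + of_real (Im h) * b)"
  proof (rule injI)
    fix x y :: complex
    assume "of_real (Re x) * a + of_real (Im x) * b = of_real (Re y) * a + of_real (Im y) * b"
    then have "of_real (Re x - Re y) * a + of_real (Im x - Im y) * b = 0"
      by (simp add: algebra_simps)
    then have "Re x - Re y = 0 \<and> Im x - Im y = 0"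
      by (rule real_linear_complex_eq_0_imp[OF det])
    then show "x = y" by (simp add: complex_eq_iff)
  qed
next
  assume inj: "inj (\<lambda>h. of_real (Re h) * a + of_real (Im h) * b)"
  show "Re a * Im b - Re b * Im a \<noteq> 0"
  proof
    assume "Re a * Im b - Re b * Im a = 0"
    then obtain k where "k \<noteq> 0" "of_real (Re k) * a + of_real (Im k) * b = 0"
      by (rule real_linear_complex_kernel)
    then have "k = 0"
      using injD[OF inj, of k 0] by simp
    with \<open>k \<noteq> 0\<close> show False ..
  qed
qed

lemma real_linear_complex_eq_0_if_Re_eq_0:
  fixes a b :: complex
  assumes det: "Re a * Im b - Re b * Im a = 0" and "Re a \<noteq> 0 \<or> Re b \<noteq> 0"
    and re: "Re (of_real s * a + of_real t * b) = 0"
  shows "of_real s * a + of_real t * b = 0"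
proof -
  have "Re a * (s * Im a + t * Im b) = Im a * (s * Re a + t * Re b) + t * (Re a * Im b - Re b * Im a)"
    "Re b * (s * Im a + t * Im b) = Im b * (s * Re a + t * Re b) - s * (Re a * Im b - Re b * Im a)"
    by (simp_all add: algebra_simps)
  moreover have "s * Re a + t * Re b = 0"
    using re by simp
  ultimately have "Re a * (s * Im a + t * Im b) = 0" "Re b * (s * Im a + t * Im b) = 0"
    unfolding det by simp_all
  with assms(2) have "s * Im a + t * Im b = 0"
    by auto
  with \<open>s * Re a + t * Re b = 0\<close> show ?thesis
    by (simp add: complex_eq_iff)
qed

section \<open>Inverse function theorem and Sard's theorem in the plane\<close>

lemma inverse_function_theorem_componentwise:
  fixes F :: "'a::euclidean_space \<Rightarrow> 'a" and F' :: "'a \<Rightarrow> 'a \<Rightarrow> 'a"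
  assumes "open U" and der: "\<And>x. x \<in> U \<Longrightarrow> (F has_derivative F' x) (at x)"
    and cont: "\<And>i. i \<in> Basis \<Longrightarrow> continuous_on U (\<lambda>x. F' x i)"
    and "x0 \<in> U" and "inj (F' x0)"
  obtains U' V g g' where "open U'" "U' \<subseteq> U" "x0 \<in> U'" "open V" "F x0 \<in> V"
    "homeomorphism U' V F g"
    "\<And>y. y \<in> V \<Longrightarrow> (g has_derivative g' y) (at y)"
    "\<And>y. y \<in> V \<Longrightarrow> g' y = inv (F' (g y))"
    "\<And>y. y \<in> V \<Longrightarrow> bij (F' (g y))"
proof -
  define DF where "DF x = Blinfun (F' x)" for x
  have DF: "blinfun_apply (DF x) = F' x" if "x \<in> U" for x
    using has_derivative_bounded_linear[OF der[OF that]]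
    by (simp add: DF_def bounded_linear_Blinfun_apply)
  have "continuous_on U DF"
    using cont by (intro continuous_on_blinfun_componentwise) (auto cong: continuous_on_cong simp: DF)
  obtain G where G: "linear G" "G \<circ> F' x0 = id"
    using linear_injective_left_inverse[OF has_derivative_linear[OF der] \<open>inj (F' x0)\<close>] \<open>x0 \<in> U\<close>
    by blast
  have "Blinfun G o\<^sub>L DF x0 = id_blinfun"
    using G \<open>x0 \<in> U\<close>
    by (intro blinfun_eqI)
       (simp add: DF linear_conv_bounded_linear bounded_linear_Blinfun_apply pointfree_idE)
  moreover have "(F has_derivative blinfun_apply (DF x)) (at x)" if "x \<in> U" for x
    using der[OF that] by (simp add: DF[OF that])
  ultimately
  obtain U' V g g' where UV: "open U'" "U' \<subseteq> U" "x0 \<in> U'" "open V" "F x0 \<in> V"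
      "homeomorphism U' V F g"
      and g: "\<And>y. y \<in> V \<Longrightarrow> (g has_derivative g' y) (at y)"
      and g': "\<And>y. y \<in> V \<Longrightarrow> g' y = inv (blinfun_apply (DF (g y)))"
      and bij: "\<And>y. y \<in> V \<Longrightarrow> bij (blinfun_apply (DF (g y)))"
    using inverse_function_theorem[OF \<open>open U\<close> _ \<open>continuous_on U DF\<close> \<open>x0 \<in> U\<close>] by metis
  have "g y \<in> U" if "y \<in> V" for y
    using UV(2,6) that by (auto simp: homeomorphism_def)
  with UV g g' bij show ?thesis
    by (intro that[of U' V g g']) (auto simp: DF)
qed

lemma negligible_image_noninjective_derivative:
  fixes f :: "complex \<Rightarrow> complex" and D :: "complex \<Rightarrow> complex \<Rightarrow> complex"
  assumes der: "\<And>x. x \<in> T \<Longrightarrow> (f has_derivative D x) (at x)"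
    and noninj: "\<And>x. x \<in> T \<Longrightarrow> \<not> inj (D x)"
  shows "negligible (f ` T)"
proof -
  \<comment> \<open>\<open>baby_Sard\<close> is stated for \<open>real^'n\<close>; transport along the linear bijection \<open>\<phi>\<close> with inverse \<open>\<psi>\<close>.\<close>
  define \<phi> :: "complex \<Rightarrow> real^2" where "\<phi> z = (\<chi> i. if i = 1 then Re z else Im z)" for z
  define \<psi> :: "real^2 \<Rightarrow> complex" where "\<psi> x = Complex (x$1) (x$2)" for x
  have \<psi>_\<phi> [simp]: "\<psi> (\<phi> z) = z" for z
    by (simp add: \<phi>_def \<psi>_def complex_eq_iff)
  have \<phi>_\<psi> [simp]: "\<phi> (\<psi> x) = x" for x
    by (simp add: \<phi>_def \<psi>_def vec_eq_iff forall_2)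
  have "linear \<phi>"
    by (rule linearI) (simp_all add: \<phi>_def vec_eq_iff)
  have "linear \<psi>"
    by (rule linearI) (simp_all add: \<psi>_def complex_eq_iff)
  define F' where "F' x = \<phi> \<circ> D (\<psi> x) \<circ> \<psi>" for x
  have der_F: "((\<phi> \<circ> f \<circ> \<psi>) has_derivative F' x) (at x within \<phi> ` T)" if "x \<in> \<phi> ` T" for x
  proof -
    have "\<psi> x \<in> T" using that by auto
    from diff_chain_at[OF linear_imp_has_derivative[OF \<open>linear \<psi>\<close>] der[OF this]]
    have "((f \<circ> \<psi>) has_derivative (D (\<psi> x) \<circ> \<psi>)) (at x)" .
    from diff_chain_at[OF this linear_imp_has_derivative[OF \<open>linear \<phi>\<close>]]
    show ?thesis
      by (auto simp: F'_def o_assoc intro: has_derivative_at_withinI)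
  qed
  have "rank (matrix (F' x)) < CARD(2)" if "x \<in> \<phi> ` T" for x
  proof -
    have "linear (F' x)"
      using der_F[OF that] has_derivative_linear by blast
    have "\<not> inj (F' x)"
      using noninj[of "\<psi> x"] that by (auto simp: F'_def inj_def) (metis \<psi>_\<phi>)
    then have "\<not> inj ((*v) (matrix (F' x)))"
      by (simp add: matrix_vector_mul(2)[OF \<open>linear (F' x)\<close>])
    then show ?thesis
      by (rule iffD2[OF less_rank_noninjective])
  qed
  with der_F have "negligible ((\<phi> \<circ> f \<circ> \<psi>) ` \<phi> ` T)"
    by (intro baby_Sard[where f' = F']) auto
  then have "negligible (\<psi> ` (\<phi> \<circ> f \<circ> \<psi>) ` \<phi> ` T)"
    by (rule negligible_differentiable_image_negligible[rotated])
       (simp_all add: linear_imp_differentiable_on[OF \<open>linear \<psi>\<close>])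
  then show ?thesis
    by (simp add: image_image)
qed

section \<open>Degenerate Jacobians produce infinite fibres\<close>

lemma local_section_of_Re:
  fixes F a b :: "complex \<Rightarrow> complex"
  assumes "open B" "z0 \<in> B"
    and der: "\<And>z. z \<in> B \<Longrightarrow> (F has_derivative (\<lambda>h. of_real (Re h) * a z + of_real (Im h) * b z)) (at z)"
    and "continuous_on B a" "continuous_on B b"
    and "Re (a z0) \<noteq> 0 \<or> Re (b z0) \<noteq> 0"
  obtains V g g' where "open V" "V \<noteq> {}" "inj_on g V" "\<And>y. y \<in> V \<Longrightarrow> g y \<in> B"
    "\<And>y. y \<in> V \<Longrightarrow> (g has_derivative g' y) (at y)"
    "\<And>y h. y \<in> V \<Longrightarrow> Re (of_real (Re (g' y h)) * a (g y) + of_real (Im (g' y h)) * b (g y)) = Re h"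
proof -
  define D where "D z h = of_real (Re h) * a z + of_real (Im h) * b z" for z h
  \<comment> \<open>\<open>q\<close> is chosen so that the derivative of \<open>\<Phi> = (Re F, Im (q z))\<close> at \<open>z0\<close> is multiplication by \<open>q\<close>.\<close>
  define q where "q = Complex (Re (a z0)) (- Re (b z0))"
  define \<Phi> where "\<Phi> z = of_real (Re (F z)) + \<i> * of_real (Im (q * z))" for z
  define \<Phi>' where "\<Phi>' z h = of_real (Re (D z h)) + \<i> * of_real (Im (q * h))" for z h
  have der_\<Phi>: "(\<Phi> has_derivative \<Phi>' z) (at z)" if "z \<in> B" for z
    unfolding \<Phi>_def \<Phi>'_def D_def by (auto intro!: derivative_eq_intros der[OF that])
  have cont: "continuous_on B (\<lambda>z. \<Phi>' z i)" if "i \<in> Basis" for i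
    using that \<open>continuous_on B a\<close> \<open>continuous_on B b\<close>
    by (auto simp: \<Phi>'_def D_def Basis_complex_def intro!: continuous_intros)
  have "\<Phi>' z0 = (\<lambda>h. q * h)" "q \<noteq> 0"
    using assms(6) by (auto simp: \<Phi>'_def D_def q_def complex_eq_iff algebra_simps)
  then have "inj (\<Phi>' z0)"
    by (simp add: inj_mult_left)
  from inverse_function_theorem_componentwise[OF \<open>open B\<close> der_\<Phi> cont \<open>z0 \<in> B\<close> this]
  obtain U V g g' where UV: "U \<subseteq> B" "open V" "\<Phi> z0 \<in> V" "homeomorphism U V \<Phi> g"
      and der_g: "\<And>y. y \<in> V \<Longrightarrow> (g has_derivative g' y) (at y)"
      and g': "\<And>y. y \<in> V \<Longrightarrow> g' y = inv (\<Phi>' (g y))"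
      and bij: "\<And>y. y \<in> V \<Longrightarrow> bij (\<Phi>' (g y))"
    by metis
  have g: "g y \<in> B" "\<Phi> (g y) = y" if "y \<in> V" for y
    using UV(1,4) that unfolding homeomorphism_def by auto
  show ?thesis
  proof (rule that[OF \<open>open V\<close> _ _ g(1) der_g])
    show "V \<noteq> {}"
      using \<open>\<Phi> z0 \<in> V\<close> by blast
    show "inj_on g V"
      using g(2) by (metis inj_onI)
    fix y h assume "y \<in> V"
    then have "\<Phi>' (g y) (g' y h) = h"
      using g' bij by (simp add: bij_is_surj surj_f_inv_f)
    then show "Re (of_real (Re (g' y h)) * a (g y) + of_real (Im (g' y h)) * b (g y)) = Re h"
      by (metis \<Phi>'_def D_def Re_complex_of_real Re_i_times Im_complex_of_real add.right_neutral
          plus_complex.sel(1) neg_equal_0_iff_equal)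
  qed
qed

lemma infinite_fibre_if_rank_one_Re:
  fixes F a b :: "complex \<Rightarrow> complex"
  assumes "open B" "z0 \<in> B"
    and der: "\<And>z. z \<in> B \<Longrightarrow> (F has_derivative (\<lambda>h. of_real (Re h) * a z + of_real (Im h) * b z)) (at z)"
    and "continuous_on B a" "continuous_on B b"
    and det: "\<And>z. z \<in> B \<Longrightarrow> Re (a z) * Im (b z) - Re (b z) * Im (a z) = 0"
    and "Re (a z0) \<noteq> 0 \<or> Re (b z0) \<noteq> 0"
  shows "\<exists>w. infinite {z \<in> B. F z = w}"
proof -
  obtain V g g' where "open V" "V \<noteq> {}" "inj_on g V" and gB: "\<And>y. y \<in> V \<Longrightarrow> g y \<in> B"
    and der_g: "\<And>y. y \<in> V \<Longrightarrow> (g has_derivative g' y) (at y)"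
    and Re_D: "\<And>y h. y \<in> V \<Longrightarrow> Re (of_real (Re (g' y h)) * a (g y) + of_real (Im (g' y h)) * b (g y)) = Re h"
    by (rule local_section_of_Re[OF assms(1,2) der assms(4,5,7)]) blast+
  then obtain c \<eta> where "\<eta> > 0" "ball c \<eta> \<subseteq> V"
    using open_contains_ball by blast
  define I where "I = {-\<eta><..<\<eta>}"
  define y where "y t = c + \<i> * of_real t" for t
  have y: "y t \<in> V" if "t \<in> I" for t
  proof -
    have "dist c (y t) < \<eta>"
      using that by (simp add: I_def y_def dist_norm norm_mult abs_less_iff)
    with \<open>ball c \<eta> \<subseteq> V\<close> show ?thesis by auto
  qed
  \<comment> \<open>Along the level curve \<open>g \<circ> y\<close> of \<open>Re F\<close>, the rank condition forces \<open>F\<close> to be constant.\<close>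
  have "((F \<circ> g \<circ> y) has_derivative (\<lambda>_. 0)) (at t within I)" if "t \<in> I" for t
  proof -
    have "Re (a (g (y t))) \<noteq> 0 \<or> Re (b (g (y t))) \<noteq> 0"
      using Re_D[OF y[OF that], of 1] by auto
    then have zero: "of_real (Re (g' (y t) (\<i> * of_real s))) * a (g (y t))
        + of_real (Im (g' (y t) (\<i> * of_real s))) * b (g (y t)) = 0" for s
      using det[OF gB[OF y[OF that]]] Re_D[OF y[OF that]]
      by (intro real_linear_complex_eq_0_if_Re_eq_0) simp_all
    have "(y has_derivative (\<lambda>s. \<i> * of_real s)) (at t)"
      unfolding y_def by (auto intro!: derivative_eq_intros)
    from diff_chain_at[OF this der_g[OF y[OF that]]]
    have d_gy: "((g \<circ> y) has_derivative (\<lambda>s. g' (y t) (\<i> * of_real s))) (at t)"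
      by (simp add: o_def)
    have d_F: "(F has_derivative (\<lambda>h. of_real (Re h) * a (g (y t)) + of_real (Im h) * b (g (y t))))
        (at ((g \<circ> y) t))"
      using der[OF gB[OF y[OF that]]] by simp
    from diff_chain_at[OF d_gy d_F] zero show ?thesis
      by (auto simp: o_def intro: has_derivative_at_withinI)
  qed
  then obtain w where "\<And>t. t \<in> I \<Longrightarrow> F (g (y t)) = w"
    using has_derivative_zero_constant[of I "F \<circ> g \<circ> y"] by (auto simp: I_def)
  then have "(g \<circ> y) ` I \<subseteq> {z \<in> B. F z = w}"
    using gB y by auto
  moreover have "inj_on (g \<circ> y) I"
  proof (rule inj_onI)
    fix s t assume "s \<in> I" "t \<in> I" "(g \<circ> y) s = (g \<circ> y) t"
    then have "y s = y t"
      using inj_onD[OF \<open>inj_on g V\<close>] y by simp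
    then show "s = t"
      by (simp add: y_def)
  qed
  then have "infinite ((g \<circ> y) ` I)"
    unfolding finite_image_iff[OF \<open>inj_on (g \<circ> y) I\<close>] using \<open>\<eta> > 0\<close> by (simp add: I_def)
  ultimately show ?thesis
    using finite_subset by blast
qed

lemma infinite_fibre_if_rank_one:
  assumes "open B" "z0 \<in> B"
    and der: "\<And>z. z \<in> B \<Longrightarrow> (f has_derivative real_derivative f z) (at z)"
    and "continuous_on B (dx f)" "continuous_on B (dy f)"
    and jac: "\<And>z. z \<in> B \<Longrightarrow> jac f z = 0"
    and "dx f z0 \<noteq> 0 \<or> dy f z0 \<noteq> 0"
  shows "\<exists>w. infinite {z \<in> B. f z = w}"
proof -
  define u where "u = (if dx f z0 \<noteq> 0 then dx f z0 else dy f z0)"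
  have "u \<noteq> 0"
    using assms(7) by (simp add: u_def)
  \<comment> \<open>Rotating by \<open>cnj u\<close> makes the real part of \<open>f\<close> non-degenerate at \<open>z0\<close>.\<close>
  have "Re (cnj u * u) \<noteq> 0"
    using \<open>u \<noteq> 0\<close> by (simp add: complex_eq_iff sum_squares_eq_zero_iff)
  then have nondegenerate: "Re (cnj u * dx f z0) \<noteq> 0 \<or> Re (cnj u * dy f z0) \<noteq> 0"
    by (auto simp: u_def split: if_splits)
  have der_rotated: "((\<lambda>z. cnj u * f z) has_derivative
      (\<lambda>h. of_real (Re h) * (cnj u * dx f z) + of_real (Im h) * (cnj u * dy f z))) (at z)"
    if "z \<in> B" for z
    using has_derivative_mult_right[OF der[OF that], of "cnj u"]
    by (simp add: real_derivative_def algebra_simps)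
  have "Re (cnj u * dx f z) * Im (cnj u * dy f z) - Re (cnj u * dy f z) * Im (cnj u * dx f z)
      = (Re u ^ 2 + Im u ^ 2) * jac f z" for z
    by (simp add: jac_def algebra_simps power2_eq_square)
  with jac have det_rotated:
    "Re (cnj u * dx f z) * Im (cnj u * dy f z) - Re (cnj u * dy f z) * Im (cnj u * dx f z) = 0"
    if "z \<in> B" for z
    using that by simp
  have "continuous_on B (\<lambda>z. cnj u * dx f z)" "continuous_on B (\<lambda>z. cnj u * dy f z)"
    using \<open>continuous_on B (dx f)\<close> \<open>continuous_on B (dy f)\<close> by (auto intro: continuous_intros)
  from infinite_fibre_if_rank_one_Re[OF \<open>open B\<close> \<open>z0 \<in> B\<close> der_rotated this det_rotated nondegenerate]
  obtain w where "infinite {z \<in> B. cnj u * f z = w}"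
    by blast
  moreover have "{z \<in> B. cnj u * f z = w} = {z \<in> B. f z = w / cnj u}"
    using \<open>u \<noteq> 0\<close> by (auto simp: field_simps)
  ultimately show ?thesis
    by auto
qed

lemma infinite_fibre_if_jac_vanishes:
  assumes "open B" "z1 \<in> B"
    and der: "\<And>z. z \<in> B \<Longrightarrow> (f has_derivative real_derivative f z) (at z)"
    and "continuous_on B (dx f)" "continuous_on B (dy f)"
    and jac: "\<And>z. z \<in> B \<Longrightarrow> jac f z = 0"
  shows "\<exists>w. infinite {z \<in> B. f z = w}"
proof (cases "\<exists>z0\<in>B. dx f z0 \<noteq> 0 \<or> dy f z0 \<noteq> 0")
  case True
  with infinite_fibre_if_rank_one[OF assms(1) _ der assms(4,5) jac] show ?thesis
    by blast
next
  case False
  obtain r where "r > 0" "ball z1 r \<subseteq> B"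
    using assms(1,2) open_contains_ball by blast
  have "(f has_derivative (\<lambda>h. 0)) (at z within ball z1 r)" if "z \<in> ball z1 r" for z
  proof -
    have "z \<in> B"
      using that \<open>ball z1 r \<subseteq> B\<close> by blast
    moreover have "real_derivative f z = (\<lambda>h. 0)"
      using False \<open>z \<in> B\<close> by (simp add: real_derivative_def fun_eq_iff)
    ultimately show ?thesis
      using der by (metis has_derivative_at_withinI)
  qed
  then obtain c where "\<And>z. z \<in> ball z1 r \<Longrightarrow> f z = c"
    using has_derivative_zero_constant[of "ball z1 r" f] by auto
  then have "ball z1 r \<subseteq> {z \<in> B. f z = c}"
    using \<open>ball z1 r \<subseteq> B\<close> by auto
  moreover have "infinite (ball z1 r)"
    using finite_imp_not_open[of "ball z1 r"] \<open>r > 0\<close> by auto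
  ultimately show ?thesis
    using finite_subset by blast
qed

section \<open>Escaping sequences and Baire category\<close>

definition escaping :: "'a::real_normed_vector set \<Rightarrow> (nat \<Rightarrow> 'a) \<Rightarrow> bool" where
  "escaping R zs \<longleftrightarrow> (\<exists>p\<in>frontier R. zs \<longlonglongrightarrow> p) \<or> filterlim (\<lambda>n. norm (zs n)) at_top sequentially"

lemma cluster_set_conv_escaping:
  "cluster_set R f = {\<zeta>. \<exists>zs. (\<forall>n. zs n \<in> R) \<and> escaping R zs \<and> (\<lambda>n. f (zs n)) \<longlonglongrightarrow> \<zeta>}"
  by (simp add: cluster_set_def escaping_def)

lemma escaping_transform:
  assumes "escaping R zs" "(\<lambda>n. zs' n - zs n) \<longlonglongrightarrow> 0"
  shows "escaping R zs'"
  using assms(1) unfolding escaping_def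
proof (elim disjE bexE)
  fix p assume "p \<in> frontier R" "zs \<longlonglongrightarrow> p"
  with tendsto_add[OF this(2) assms(2)] show "(\<exists>p\<in>frontier R. zs' \<longlonglongrightarrow> p) \<or> filterlim (\<lambda>n. norm (zs' n)) at_top sequentially"
    by auto
next
  assume "filterlim (\<lambda>n. norm (zs n)) at_top sequentially"
  with tendsto_minus[OF tendsto_norm[OF assms(2)]]
  have "filterlim (\<lambda>n. - norm (zs' n - zs n) + norm (zs n)) at_top sequentially"
    by (intro filterlim_tendsto_add_at_top) simp_all
  then have "filterlim (\<lambda>n. norm (zs' n)) at_top sequentially"
    by (rule filterlim_at_top_mono)
       (intro always_eventually allI, use norm_diff_ineq[of "zs n" "zs' n - zs n" for n] in simp)
  then show "(\<exists>p\<in>frontier R. zs' \<longlonglongrightarrow> p) \<or> filterlim (\<lambda>n. norm (zs' n)) at_top sequentially"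
    by simp
qed

lemma not_escaping_if_eventually_in_compact:
  assumes "open R" "compact K" "K \<subseteq> R" "eventually (\<lambda>n. zs n \<in> K) sequentially"
  shows "\<not> escaping R zs"
  unfolding escaping_def
proof (intro notI, elim disjE bexE)
  fix p assume "p \<in> frontier R" "zs \<longlonglongrightarrow> p"
  then have "p \<in> K"
    using Lim_in_closed_set[OF compact_imp_closed[OF \<open>compact K\<close>] assms(4)] by simp
  with \<open>p \<in> frontier R\<close> \<open>K \<subseteq> R\<close> \<open>open R\<close> show False
    by (auto simp: frontier_def interior_open)
next
  assume "filterlim (\<lambda>n. norm (zs n)) at_top sequentially"
  moreover obtain M where "\<And>x. x \<in> K \<Longrightarrow> norm x \<le> M"
    using compact_imp_bounded[OF \<open>compact K\<close>] by (auto simp: bounded_iff)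
  ultimately have "eventually (\<lambda>n. M + 1 \<le> norm (zs n)) sequentially"
    by (simp add: filterlim_at_top)
  then have "eventually (\<lambda>n. False) sequentially"
    using assms(4) by eventually_elim (use \<open>\<And>x. x \<in> K \<Longrightarrow> norm x \<le> M\<close> in fastforce)
  then show False
    by simp
qed

lemma Baire_sublevel_not_nowhere_dense:
  fixes N :: "'a::{real_normed_vector,heine_borel} \<Rightarrow> nat"
  assumes "closed S" "S \<noteq> {}"
  obtains k where "\<not> S \<subseteq> closure (S - closure {x. N x \<le> k})"
proof (rule ccontr)
  define F where "F k = closure {x. N x \<le> k}" for k
  assume "\<not> thesis"
  with that have "S \<subseteq> closure (S - F k)" for k
    by (auto simp: F_def)
  moreover have "openin (top_of_set S) (S - F k)" for k
    unfolding Diff_eq F_def by (intro openin_open_Int open_Compl closed_closure)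
  ultimately have "S \<subseteq> closure (\<Inter>k. S - F k)"
    by (intro Baire assms(1)) auto
  with assms(2) have "(\<Inter>k. S - F k) \<noteq> {}"
    by (metis closure_empty subset_empty)
  then obtain x where "x \<in> (\<Inter>k. S - F k)"
    by blast
  moreover have "x \<in> F (N x)"
    using closure_subset[of "{y. N y \<le> N x}"] by (auto simp: F_def)
  ultimately show False
    by blast
qed

lemma Baire_open_subset_closure_sublevel:
  fixes N :: "'a::{real_normed_vector,heine_borel} \<Rightarrow> nat"
  assumes "open U" "U \<noteq> {}"
  obtains B k where "open B" "B \<noteq> {}" "B \<subseteq> U" "B \<subseteq> closure {x. N x \<le> k}"
proof -
  obtain x0 r where "r > 0" "cball x0 r \<subseteq> U"
    using assms open_contains_cball by blast
  define F where "F k = closure {x. N x \<le> k}" for k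
  obtain k where "\<not> cball x0 r \<subseteq> closure (cball x0 r - F k)"
    unfolding F_def by (rule Baire_sublevel_not_nowhere_dense[of "cball x0 r" N]) (use \<open>r > 0\<close> in auto)
  then obtain y where "y \<in> cball x0 r" "y \<notin> closure (cball x0 r - F k)"
    by blast
  then obtain e where "e > 0" "ball y e \<subseteq> - closure (cball x0 r - F k)"
    using open_contains_ball[of "- closure (cball x0 r - F k)"] by blast
  have "y \<in> closure (ball x0 r)"
    using \<open>y \<in> cball x0 r\<close> \<open>r > 0\<close> by simp
  with \<open>e > 0\<close> have "y \<in> ball y e \<inter> closure (ball x0 r)"
    by simp
  then have "ball y e \<inter> ball x0 r \<noteq> {}"
    using open_Int_closure_eq_empty[OF open_ball, of y e "ball x0 r"] by blast
  moreover have "ball y e \<inter> ball x0 r \<subseteq> F k"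
  proof
    fix x assume x: "x \<in> ball y e \<inter> ball x0 r"
    then have "x \<notin> cball x0 r - F k"
      using \<open>ball y e \<subseteq> - closure (cball x0 r - F k)\<close> closure_subset by blast
    with x show "x \<in> F k"
      by auto
  qed
  moreover have "ball y e \<inter> ball x0 r \<subseteq> U"
    using \<open>cball x0 r \<subseteq> U\<close> by auto
  ultimately show ?thesis
    by (intro that[of "ball y e \<inter> ball x0 r" k]) (auto simp: F_def)
qed

section \<open>\<open>C\<^sup>1\<close> maps of the plane with finite fibres\<close>

lemma finite_ex_pos_lower_bound:
  fixes e :: "'a \<Rightarrow> real"
  assumes "finite A" "\<And>x. x \<in> A \<Longrightarrow> e x > 0"
  obtains d where "d > 0" "\<And>x. x \<in> A \<Longrightarrow> d \<le> e x"
proof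
  show "Min (insert 1 (e ` A)) > 0" "\<And>x. x \<in> A \<Longrightarrow> Min (insert 1 (e ` A)) \<le> e x"
    using assms by simp_all
qed

lemma finite_ex_separation:
  fixes P :: "'a::metric_space set"
  assumes "finite P"
  obtains \<rho> where "\<rho> > 0" "\<And>a b. a \<in> P \<Longrightarrow> b \<in> P \<Longrightarrow> a \<noteq> b \<Longrightarrow> 2 * \<rho> \<le> dist a b"
proof -
  define A where "A = {(a, b). a \<in> P \<and> b \<in> P \<and> a \<noteq> b}"
  have "finite A"
    by (rule finite_subset[of _ "P \<times> P"]) (use assms in \<open>auto simp: A_def\<close>)
  then obtain \<rho> where "\<rho> > 0" and \<rho>: "\<And>p. p \<in> A \<Longrightarrow> \<rho> \<le> dist (fst p) (snd p) / 2"
    by (rule finite_ex_pos_lower_bound[where e = "\<lambda>p. dist (fst p) (snd p) / 2"]) (auto simp: A_def)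
  show ?thesis
  proof (rule that[OF \<open>\<rho> > 0\<close>])
    fix a b assume "a \<in> P" "b \<in> P" "a \<noteq> b"
    then show "2 * \<rho> \<le> dist a b"
      using \<rho>[of "(a, b)"] by (simp add: A_def)
  qed
qed

lemma finite_ex_common_radius:
  fixes Q :: "'a \<Rightarrow> real \<Rightarrow> 'b \<Rightarrow> bool"
  assumes "finite P" and ex: "\<And>z. z \<in> P \<Longrightarrow> \<exists>\<epsilon>>0. \<exists>g. Q z \<epsilon> g"
    and mono: "\<And>z \<epsilon> \<epsilon>' g. Q z \<epsilon> g \<Longrightarrow> 0 < \<epsilon>' \<Longrightarrow> \<epsilon>' \<le> \<epsilon> \<Longrightarrow> Q z \<epsilon>' g"
  obtains \<epsilon> G where "\<epsilon> > 0" "\<And>z. z \<in> P \<Longrightarrow> Q z \<epsilon> (G z)"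
proof -
  from ex obtain E where "\<forall>z\<in>P. E z > 0 \<and> (\<exists>g. Q z (E z) g)"
    by (metis bchoice)
  then obtain G where EG: "\<And>z. z \<in> P \<Longrightarrow> E z > 0 \<and> Q z (E z) (G z)"
    by (metis bchoice)
  obtain \<epsilon> where "\<epsilon> > 0" and \<epsilon>: "\<And>z. z \<in> P \<Longrightarrow> \<epsilon> \<le> E z"
    using finite_ex_pos_lower_bound[OF \<open>finite P\<close>, of E] EG by blast
  show ?thesis
  proof (rule that[OF \<open>\<epsilon> > 0\<close>])
    fix z assume "z \<in> P"
    with EG \<epsilon> \<open>\<epsilon> > 0\<close> show "Q z \<epsilon> (G z)"
      by (blast intro: mono)
  qed
qed

lemma image_eq_if_inj_on_card_le:
  assumes "finite B" "inj_on g A" "g ` A \<subseteq> B" "card B \<le> card A"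
  shows "g ` A = B"
proof (rule card_subset_eq[OF assms(1,3)])
  show "card (g ` A) = card B"
    using card_image[OF assms(2)] card_mono[OF assms(1,3)] assms(4) by linarith
qed

locale C1_finite_fibres =
  fixes R :: "complex set" and f :: "complex \<Rightarrow> complex"
  assumes open_domain: "open R"
    and differentiable: "\<And>z. z \<in> R \<Longrightarrow> f differentiable (at z)"
    and continuous_dx: "continuous_on R (dx f)"
    and continuous_dy: "continuous_on R (dy f)"
    and finite_fibres: "\<And>w. finite {z \<in> R. f z = w}"
begin

lemma f_has_derivative: "z \<in> R \<Longrightarrow> (f has_derivative real_derivative f z) (at z)"
  by (rule has_derivative_real_derivative[OF differentiable])

lemma negligible_critical_values: "negligible (f ` singset R f)"
proof (rule negligible_image_noninjective_derivative)
  fix z assume "z \<in> singset R f"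
  then show "(f has_derivative real_derivative f z) (at z)" "\<not> inj (real_derivative f z)"
    using f_has_derivative inj_real_linear_complex_iff[of "dx f z" "dy f z"]
    by (auto simp: singset_def jac_def real_derivative_def[abs_def])
qed

lemma local_homeomorphism_at_regular_point:
  assumes "z \<in> R" "jac f z \<noteq> 0"
  obtains U V g where "open U" "U \<subseteq> R" "z \<in> U" "open V" "f z \<in> V" "homeomorphism U V f g"
proof -
  have cont: "continuous_on R (\<lambda>x. real_derivative f x i)" if "i \<in> Basis" for i
    using that continuous_dx continuous_dy by (auto simp: Basis_complex_def real_derivative_def)
  have inj: "inj (real_derivative f z)"
    using assms(2) inj_real_linear_complex_iff[of "dx f z" "dy f z"]
    by (simp add: jac_def real_derivative_def[abs_def])
  obtain U V g where "open U" "U \<subseteq> R" "z \<in> U" "open V" "f z \<in> V" "homeomorphism U V f g"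
    by (rule inverse_function_theorem_componentwise[OF open_domain f_has_derivative cont \<open>z \<in> R\<close> inj])
  then show ?thesis
    by (rule that)
qed

lemma regular_point_nearby:
  assumes "z \<in> R" "\<delta> > 0"
  obtains z' where "z' \<in> R" "dist z' z < \<delta>" "jac f z' \<noteq> 0"
proof -
  have "\<exists>z'\<in>R \<inter> ball z \<delta>. jac f z' \<noteq> 0"
  proof (rule ccontr)
    assume "\<not> ?thesis"
    then have jac: "\<And>z'. z' \<in> R \<inter> ball z \<delta> \<Longrightarrow> jac f z' = 0"
      by blast
    have "open (R \<inter> ball z \<delta>)" "z \<in> R \<inter> ball z \<delta>"
      using open_domain assms by auto
    moreover have "\<And>z'. z' \<in> R \<inter> ball z \<delta> \<Longrightarrow> (f has_derivative real_derivative f z') (at z')"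
      using f_has_derivative by blast
    moreover have "continuous_on (R \<inter> ball z \<delta>) (dx f)" "continuous_on (R \<inter> ball z \<delta>) (dy f)"
      using continuous_dx continuous_dy by (auto intro: continuous_on_subset)
    ultimately obtain w where "infinite {z' \<in> R \<inter> ball z \<delta>. f z' = w}"
      using infinite_fibre_if_jac_vanishes[of "R \<inter> ball z \<delta>" z f, OF _ _ _ _ _ jac] by blast
    moreover have "{z' \<in> R \<inter> ball z \<delta>. f z' = w} \<subseteq> {z' \<in> R. f z' = w}"
      by auto
    ultimately show False
      using finite_fibres finite_subset by blast
  qed
  then show ?thesis
    using that by (auto simp: dist_commute)
qed

lemma regular_value_nearby:
  assumes "z \<in> R" "\<delta> > 0"
  obtains z' where "z' \<in> R" "dist z' z < \<delta>" "dist (f z') (f z) < \<delta>" "f z' \<notin> f ` singset R f"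
proof -
  obtain d where "d > 0" and d: "\<And>x. dist x z < d \<Longrightarrow> dist (f x) (f z) < \<delta>"
    using has_derivative_continuous[OF f_has_derivative[OF assms(1)]] assms(2)
    unfolding continuous_at_eps_delta by blast
  obtain z0 where "z0 \<in> R" "dist z0 z < min d \<delta>" "jac f z0 \<noteq> 0"
    using regular_point_nearby[OF assms(1)] \<open>d > 0\<close> assms(2) by (metis min_less_iff_conj)
  then obtain U V g where UV: "open U" "U \<subseteq> R" "z0 \<in> U" "homeomorphism U V f g" "open V"
    using local_homeomorphism_at_regular_point by metis
  define W where "W = U \<inter> ball z (min d \<delta>)"
  \<comment> \<open>\<open>f\<close> maps the nonempty open set \<open>W\<close> onto an open set, which the negligible \<open>f ` singset R f\<close> cannot cover.\<close>
  have "openin (top_of_set V) (f ` W)"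
    using UV(1) by (auto simp: W_def intro!: homeomorphism_imp_open_map[OF UV(4)] openin_open_Int)
  then have "open (f ` W)"
    using UV(5) openin_open_trans by blast
  moreover have "z0 \<in> W"
    using \<open>z0 \<in> U\<close> \<open>dist z0 z < min d \<delta>\<close> by (simp add: W_def dist_commute)
  ultimately have "\<not> f ` W \<subseteq> f ` singset R f"
    using negligible_critical_values negligible_subset open_not_negligible by blast
  then obtain z' where z': "z' \<in> W" "f z' \<notin> f ` singset R f"
    by blast
  then have "z' \<in> R" "dist z' z < min d \<delta>"
    using UV(2) by (auto simp: W_def dist_commute)
  with d z'(2) show ?thesis
    by (intro that[of z']) auto
qed

lemma local_inverse_at_regular_point:
  assumes "z \<in> R" "jac f z \<noteq> 0" "\<rho> > 0"
  obtains \<epsilon> g where "\<epsilon> > 0" "continuous_on (ball (f z) \<epsilon>) g"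
    "\<And>y. y \<in> ball (f z) \<epsilon> \<Longrightarrow> g y \<in> R \<and> f (g y) = y \<and> dist (g y) z < \<rho>"
proof -
  obtain U V g where UV: "open U" "U \<subseteq> R" "z \<in> U" "open V" "f z \<in> V" "homeomorphism U V f g"
    using local_homeomorphism_at_regular_point[OF assms(1,2)] by blast
  then have g: "g (f z) = z" "continuous_on V g" "\<And>y. y \<in> V \<Longrightarrow> g y \<in> U \<and> f (g y) = y"
    by (auto simp: homeomorphism_def)
  have "continuous (at (f z)) g"
    using continuous_on_eq_continuous_at[OF UV(4)] g(2) UV(5) by blast
  then obtain d where "d > 0" and d: "\<forall>y. dist y (f z) < d \<longrightarrow> dist (g y) (g (f z)) < \<rho>"
    using assms(3) unfolding continuous_at_eps_delta by blast
  obtain e where "e > 0" "ball (f z) e \<subseteq> V"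
    using UV(4,5) open_contains_ball by blast
  show ?thesis
  proof (rule that[of "min d e" g])
    show "continuous_on (ball (f z) (min d e)) g"
      by (rule continuous_on_subset[OF g(2)]) (use \<open>ball (f z) e \<subseteq> V\<close> in auto)
    fix y assume y: "y \<in> ball (f z) (min d e)"
    then have "y \<in> V"
      using \<open>ball (f z) e \<subseteq> V\<close> by auto
    then have "g y \<in> R" "f (g y) = y"
      using g(3) UV(2) by auto
    moreover have "dist y (f z) < d"
      using y by (simp add: dist_commute)
    then have "dist (g y) z < \<rho>"
      using d g(1) by metis
    ultimately show "g y \<in> R \<and> f (g y) = y \<and> dist (g y) z < \<rho>"
      by blast
  qed (use \<open>d > 0\<close> \<open>e > 0\<close> in auto)
qed

lemma local_inverse_branches:
  assumes "w \<notin> f ` singset R f"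
  obtains \<epsilon> G where "\<epsilon> > 0"
    "\<And>z y. z \<in> R \<Longrightarrow> f z = w \<Longrightarrow> y \<in> ball w \<epsilon> \<Longrightarrow> G z y \<in> R \<and> f (G z y) = y"
    "\<And>z. z \<in> R \<Longrightarrow> f z = w \<Longrightarrow> continuous_on (ball w \<epsilon>) (G z)"
    "\<And>z z' y. z \<in> R \<Longrightarrow> f z = w \<Longrightarrow> z' \<in> R \<Longrightarrow> f z' = w \<Longrightarrow> z \<noteq> z' \<Longrightarrow> y \<in> ball w \<epsilon>
      \<Longrightarrow> G z y \<noteq> G z' y"
proof -
  define P where "P = {z \<in> R. f z = w}"
  have "finite P"
    using finite_fibres by (simp add: P_def)
  then obtain \<rho> where "\<rho> > 0" and \<rho>: "\<And>a b. a \<in> P \<Longrightarrow> b \<in> P \<Longrightarrow> a \<noteq> b \<Longrightarrow> 2 * \<rho> \<le> dist a b"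
    by (rule finite_ex_separation) blast
  define Q where "Q z \<epsilon> g \<longleftrightarrow> continuous_on (ball w \<epsilon>) g \<and>
      (\<forall>y\<in>ball w \<epsilon>. g y \<in> R \<and> f (g y) = y \<and> dist (g y) z < \<rho>)" for z \<epsilon> g
  have "\<exists>\<epsilon>>0. \<exists>g. Q z \<epsilon> g" if "z \<in> P" for z
  proof -
    have "z \<in> R" "f z = w" "jac f z \<noteq> 0"
      using that assms by (auto simp: P_def singset_def)
    with local_inverse_at_regular_point[OF this(1,3) \<open>\<rho> > 0\<close>] show ?thesis
      unfolding Q_def by metis
  qed
  moreover have "Q z \<epsilon>' g" if "Q z \<epsilon> g" "\<epsilon>' \<le> \<epsilon>" for z \<epsilon> \<epsilon>' g
    using that subset_ball[OF \<open>\<epsilon>' \<le> \<epsilon>\<close>] unfolding Q_def by (blast intro: continuous_on_subset)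
  ultimately obtain \<epsilon> G where "\<epsilon> > 0" and Q: "\<And>z. z \<in> P \<Longrightarrow> Q z \<epsilon> (G z)"
    using finite_ex_common_radius[OF \<open>finite P\<close>, of Q] by blast
  show ?thesis
  proof (rule that[OF \<open>\<epsilon> > 0\<close>])
    fix z z' y assume "z \<in> R" "f z = w" "z' \<in> R" "f z' = w" "z \<noteq> z'" "y \<in> ball w \<epsilon>"
    then have "z \<in> P" "z' \<in> P"
      by (simp_all add: P_def)
    show "G z y \<noteq> G z' y"
    proof
      assume "G z y = G z' y"
      have "dist z z' \<le> dist z (G z y) + dist z' (G z y)"
        by (rule dist_triangle2)
      also have "\<dots> < 2 * \<rho>"
      proof -
        have "dist (G z y) z < \<rho>" "dist (G z' y) z' < \<rho>"
          using Q[OF \<open>z \<in> P\<close>] Q[OF \<open>z' \<in> P\<close>] \<open>y \<in> ball w \<epsilon>\<close> unfolding Q_def by blast+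
        with \<open>G z y = G z' y\<close> show ?thesis
          by (simp add: dist_commute)
      qed
      finally show False
        using \<rho>[OF \<open>z \<in> P\<close> \<open>z' \<in> P\<close> \<open>z \<noteq> z'\<close>] by simp
    qed
  qed (use Q in \<open>auto simp: P_def Q_def\<close>)
qed

lemma Val_lower_semicontinuous:
  assumes "w \<notin> f ` singset R f"
  obtains \<epsilon> where "\<epsilon> > 0" "\<And>y. y \<in> ball w \<epsilon> \<Longrightarrow> Val R f w \<le> Val R f y"
proof -
  obtain \<epsilon> G where "\<epsilon> > 0"
    and branch: "\<And>z y. z \<in> R \<Longrightarrow> f z = w \<Longrightarrow> y \<in> ball w \<epsilon> \<Longrightarrow> G z y \<in> R \<and> f (G z y) = y"
    and disjoint: "\<And>z z' y. z \<in> R \<Longrightarrow> f z = w \<Longrightarrow> z' \<in> R \<Longrightarrow> f z' = w \<Longrightarrow> z \<noteq> z' \<Longrightarrow> y \<in> ball w \<epsilon>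
      \<Longrightarrow> G z y \<noteq> G z' y"
    by (rule local_inverse_branches[OF assms]) blast
  have "Val R f w \<le> Val R f y" if "y \<in> ball w \<epsilon>" for y
    unfolding Val_def
  proof (rule card_inj_on_le[where f = "\<lambda>z. G z y"])
    show "inj_on (\<lambda>z. G z y) {z \<in> R. f z = w}"
    proof (rule inj_onI)
      fix a b assume "a \<in> {z \<in> R. f z = w}" "b \<in> {z \<in> R. f z = w}" "G a y = G b y"
      then show "a = b"
        using disjoint[OF _ _ _ _ _ that] by blast
    qed
    show "(\<lambda>z. G z y) ` {z \<in> R. f z = w} \<subseteq> {z \<in> R. f z = y}"
      using branch[OF _ _ that] by auto
  qed (rule finite_fibres)
  with \<open>\<epsilon> > 0\<close> show ?thesis
    by (rule that)
qed

lemma cluster_value_along_regular_values: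
  assumes "w \<in> cluster_set R f"
  obtains zs where "\<And>n. zs n \<in> R" "\<And>n. f (zs n) \<notin> f ` singset R f" "escaping R zs"
    "(\<lambda>n. f (zs n)) \<longlonglongrightarrow> w"
proof -
  obtain zs0 where "\<And>n. zs0 n \<in> R" "escaping R zs0" "(\<lambda>n. f (zs0 n)) \<longlonglongrightarrow> w"
    using assms by (auto simp: cluster_set_conv_escaping)
  have "\<exists>z. z \<in> R \<and> f z \<notin> f ` singset R f \<and> dist z (zs0 n) < inverse (Suc n)
      \<and> dist (f z) (f (zs0 n)) < inverse (Suc n)" for n
  proof -
    have "inverse (real (Suc n)) > 0"
      by simp
    from regular_value_nearby[OF \<open>\<And>n. zs0 n \<in> R\<close> this] show ?thesis
      by blast
  qed
  then obtain zs where "\<forall>n. zs n \<in> R \<and> f (zs n) \<notin> f ` singset R f \<and> dist (zs n) (zs0 n) < inverse (Suc n)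
      \<and> dist (f (zs n)) (f (zs0 n)) < inverse (Suc n)"
    by (metis choice)
  then have zs: "\<And>n. zs n \<in> R" "\<And>n. f (zs n) \<notin> f ` singset R f"
    and close: "\<And>n. dist (zs n) (zs0 n) < inverse (Suc n)" "\<And>n. dist (f (zs n)) (f (zs0 n)) < inverse (Suc n)"
    by simp_all
  have "(\<lambda>n. zs n - zs0 n) \<longlonglongrightarrow> 0" "(\<lambda>n. f (zs n) - f (zs0 n)) \<longlonglongrightarrow> 0"
    using close by (auto intro!: Lim_null_comparison[OF _ LIMSEQ_inverse_real_of_nat]
        always_eventually less_imp_le simp: dist_norm)
  moreover have "(\<lambda>n. (f (zs n) - f (zs0 n)) + f (zs0 n)) \<longlonglongrightarrow> 0 + w"
    using calculation(2) \<open>(\<lambda>n. f (zs0 n)) \<longlonglongrightarrow> w\<close> by (rule tendsto_add)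
  ultimately show ?thesis
    by (intro that[OF zs escaping_transform[OF \<open>escaping R zs0\<close>]]) simp_all
qed

lemma branches_exhaust_fibres_if_Val_locally_maximal:
  assumes w: "w \<notin> f ` singset R f" and "e > 0"
    and max: "\<forall>y\<in>ball w e - f ` singset R f. Val R f y \<le> Val R f w"
  obtains \<epsilon> G where "\<epsilon> > 0"
    "\<And>z y. z \<in> R \<Longrightarrow> f z = w \<Longrightarrow> y \<in> cball w \<epsilon> \<Longrightarrow> G z y \<in> R"
    "\<And>z. z \<in> R \<Longrightarrow> f z = w \<Longrightarrow> continuous_on (cball w \<epsilon>) (G z)"
    "\<And>y. y \<in> cball w \<epsilon> \<Longrightarrow> y \<notin> f ` singset R f \<Longrightarrow>
      {z \<in> R. f z = y} = (\<lambda>z. G z y) ` {z \<in> R. f z = w}"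
proof -
  obtain \<epsilon>0 G where "\<epsilon>0 > 0"
    and branch: "\<And>z y. z \<in> R \<Longrightarrow> f z = w \<Longrightarrow> y \<in> ball w \<epsilon>0 \<Longrightarrow> G z y \<in> R \<and> f (G z y) = y"
    and cont: "\<And>z. z \<in> R \<Longrightarrow> f z = w \<Longrightarrow> continuous_on (ball w \<epsilon>0) (G z)"
    and disjoint: "\<And>z z' y. z \<in> R \<Longrightarrow> f z = w \<Longrightarrow> z' \<in> R \<Longrightarrow> f z' = w \<Longrightarrow> z \<noteq> z' \<Longrightarrow> y \<in> ball w \<epsilon>0
      \<Longrightarrow> G z y \<noteq> G z' y"
    by (rule local_inverse_branches[OF w]) blast
  define \<epsilon> where "\<epsilon> = min \<epsilon>0 e / 2"
  have "\<epsilon> > 0" and small: "cball w \<epsilon> \<subseteq> ball w \<epsilon>0" "cball w \<epsilon> \<subseteq> ball w e"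
    using \<open>\<epsilon>0 > 0\<close> \<open>e > 0\<close> by (auto simp: \<epsilon>_def)
  show ?thesis
  proof (rule that[OF \<open>\<epsilon> > 0\<close>])
    show "continuous_on (cball w \<epsilon>) (G z)" if "z \<in> R" "f z = w" for z
      using cont[OF that] small(1) by (rule continuous_on_subset)
    fix y assume y: "y \<in> cball w \<epsilon>"
    then show "G z y \<in> R" if "z \<in> R" "f z = w" for z
      using branch[OF that] small(1) by blast
    \<comment> \<open>Maximality of \<open>Val R f w\<close> leaves no room for preimages of \<open>y\<close> off the branches.\<close>
    assume "y \<notin> f ` singset R f"
    show "{z \<in> R. f z = y} = (\<lambda>z. G z y) ` {z \<in> R. f z = w}"
    proof (rule image_eq_if_inj_on_card_le[OF finite_fibres, symmetric])
      show "inj_on (\<lambda>z. G z y) {z \<in> R. f z = w}"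
        using disjoint y small(1) by (blast intro: inj_onI)
      show "(\<lambda>z. G z y) ` {z \<in> R. f z = w} \<subseteq> {z \<in> R. f z = y}"
        using branch y small(1) by blast
      show "card {z \<in> R. f z = y} \<le> card {z \<in> R. f z = w}"
        using max \<open>y \<notin> f ` singset R f\<close> y small(2) by (auto simp: Val_def)
    qed
  qed
qed

lemma not_cluster_value_if_Val_locally_maximal:
  assumes "w \<notin> f ` singset R f" "e > 0"
    and "\<forall>y\<in>ball w e - f ` singset R f. Val R f y \<le> Val R f w"
  shows "w \<notin> cluster_set R f"
proof
  assume "w \<in> cluster_set R f"
  then obtain zs where zs: "\<And>n. zs n \<in> R" "\<And>n. f (zs n) \<notin> f ` singset R f" "escaping R zs"
    and lim: "(\<lambda>n. f (zs n)) \<longlonglongrightarrow> w"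
    by (rule cluster_value_along_regular_values) blast
  obtain \<epsilon> G where "\<epsilon> > 0"
    and branch: "\<And>z y. z \<in> R \<Longrightarrow> f z = w \<Longrightarrow> y \<in> cball w \<epsilon> \<Longrightarrow> G z y \<in> R"
    and cont: "\<And>z. z \<in> R \<Longrightarrow> f z = w \<Longrightarrow> continuous_on (cball w \<epsilon>) (G z)"
    and fibre: "\<And>y. y \<in> cball w \<epsilon> \<Longrightarrow> y \<notin> f ` singset R f \<Longrightarrow>
      {z \<in> R. f z = y} = (\<lambda>z. G z y) ` {z \<in> R. f z = w}"
    by (rule branches_exhaust_fibres_if_Val_locally_maximal[OF assms]) (rule that)
  define K where "K = (\<Union>z\<in>{z \<in> R. f z = w}. G z ` cball w \<epsilon>)"
  have "compact K"
    unfolding K_def using finite_fibres cont by (auto intro!: compact_UN compact_continuous_image)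
  moreover have "K \<subseteq> R"
    using branch by (auto simp: K_def)
  moreover have "eventually (\<lambda>n. dist (f (zs n)) w < \<epsilon>) sequentially"
    using tendstoD[OF lim \<open>\<epsilon> > 0\<close>] .
  then have "eventually (\<lambda>n. zs n \<in> K) sequentially"
  proof (rule eventually_mono)
    fix n assume "dist (f (zs n)) w < \<epsilon>"
    then have "f (zs n) \<in> cball w \<epsilon>"
      by (simp add: dist_commute)
    with fibre[OF _ zs(2)] zs(1) show "zs n \<in> K"
      unfolding K_def by blast
  qed
  ultimately show False
    using not_escaping_if_eventually_in_compact[OF open_domain] zs(3) by blast
qed

lemma ex_locally_maximal_regular_value:
  assumes "open B" "B \<noteq> {}" "B \<subseteq> closure {y. Val R f y \<le> k}"
  obtains w e where "w \<in> B" "w \<notin> f ` singset R f" "e > 0"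
    "\<forall>y\<in>ball w e - f ` singset R f. Val R f y \<le> Val R f w"
proof -
  have bounded: "Val R f w \<le> k" if w: "w \<in> B" "w \<notin> f ` singset R f" for w
  proof -
    obtain \<epsilon> where "\<epsilon> > 0" and \<epsilon>: "\<And>y. y \<in> ball w \<epsilon> \<Longrightarrow> Val R f w \<le> Val R f y"
      by (rule Val_lower_semicontinuous[OF w(2)]) blast
    have "w \<in> closure {y. Val R f y \<le> k}"
      using assms(3) \<open>w \<in> B\<close> by blast
    then obtain y where "Val R f y \<le> k" "dist y w < \<epsilon>"
      using \<open>\<epsilon> > 0\<close> unfolding closure_approachable by blast
    with \<epsilon>[of y] show ?thesis
      by (simp add: dist_commute)
  qed
  define Vals where "Vals = Val R f ` (B - f ` singset R f)"
  have "\<not> B \<subseteq> f ` singset R f"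
    using negligible_subset[OF negligible_critical_values] open_not_negligible[OF assms(1,2)] by blast
  then have "Vals \<noteq> {}"
    by (auto simp: Vals_def)
  moreover have "finite Vals"
    by (rule finite_subset[of _ "{..k}"]) (use bounded in \<open>auto simp: Vals_def\<close>)
  ultimately have "Max Vals \<in> Vals"
    by (rule Max_in[rotated])
  then obtain w where "w \<in> B - f ` singset R f" "Max Vals = Val R f w"
    unfolding Vals_def by (rule imageE)
  then have w: "w \<in> B" "w \<notin> f ` singset R f" "Val R f w = Max Vals"
    by simp_all
  obtain e where "e > 0" "ball w e \<subseteq> B"
    using assms(1) w(1) open_contains_ball by blast
  show ?thesis
  proof (rule that[OF w(1,2) \<open>e > 0\<close>], intro ballI)
    fix y assume "y \<in> ball w e - f ` singset R f"
    with \<open>ball w e \<subseteq> B\<close> have "Val R f y \<in> Vals"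
      by (auto simp: Vals_def)
    with \<open>finite Vals\<close> show "Val R f y \<le> Val R f w"
      unfolding w(3) by (rule Max_ge)
  qed
qed

theorem interior_critical_values_Un_cluster_set:
  "interior (f ` singset R f \<union> cluster_set R f) = {}"
proof (rule ccontr)
  assume "interior (f ` singset R f \<union> cluster_set R f) \<noteq> {}"
  then obtain B k where "open B" "B \<noteq> {}" and B: "B \<subseteq> interior (f ` singset R f \<union> cluster_set R f)"
    and "B \<subseteq> closure {y. Val R f y \<le> k}"
    by (rule Baire_open_subset_closure_sublevel[OF open_interior])
  obtain w e where "w \<in> B" and w: "w \<notin> f ` singset R f" and "e > 0"
    and max: "\<forall>y\<in>ball w e - f ` singset R f. Val R f y \<le> Val R f w"
    by (rule ex_locally_maximal_regular_value[OF \<open>open B\<close> \<open>B \<noteq> {}\<close> \<open>B \<subseteq> closure _\<close>])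
  from w \<open>e > 0\<close> max have "w \<notin> cluster_set R f"
    by (rule not_cluster_value_if_Val_locally_maximal)
  with \<open>w \<in> B\<close> B w show False
    using interior_subset by blast
qed

end

theorem corollary4p10:
  fixes R :: "complex set" and f :: "complex \<Rightarrow> complex"
  assumes "open R" and "harmonic_on R f"
    and "\<forall>w. finite {z \<in> R. f z = w}"
  shows "interior (f ` singset R f \<union> cluster_set R f) = {}"
proof -
  have "\<forall>z\<in>R. f differentiable (at z)" "\<forall>z\<in>R. dx f differentiable (at z) \<and> dy f differentiable (at z)"
    using assms(2) by (auto simp: harmonic_on_def)
  then interpret C1_finite_fibres R f
    using assms(1,3)
    by unfold_locales (auto intro!: continuous_at_imp_continuous_on differentiable_imp_continuous_within)
  show ?thesis
    by (rule interior_critical_values_Un_cluster_set)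
qed

end
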